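(* Let $n\ge1$ and $P=\Phi^+(A_n)=\{(i,j)\colon 1\le i,j\le n,\ i+j\ge n+1\}$. Fix $k\in\{n-1,n-3,\dots,-(n-3),-(n-1)\}$. Then \[2\sum_{\substack{(i,j)\in P\\ j-i=k}}\mathbb{1}_{(i,j)}-\sum_{\substack{(i,j)\in P\\ j-i=k-1}}\mathbb{1}_{(i,j)}-\sum_{\substack{(i,j)\in P\\ j-i=k+1}}\mathbb{1}_{(i,j)}\equiv 1.\]
   Context: $P$ is ordered by $(i,j)\le(i',j')$ iff $i\le i'$ and $j\le j'$. $\mathcal{J}(P)$ is the set of order ideals of $P$. For $x\in P$, $I\in\mathcal{J}(P)$: $\mathbb{1}_x(I)=1$ if $x\in I$, else $0$; $T_x^+(I)=1$ if $x$ is a minimal element of $P\setminus I$, else $0$; $T_x^-(I)=1$ if $x$ is a maximal element of $I$, else $0$; $T_x=T_x^+-T_x^-$. For $f,g\colon\mathcal{J}(P)\to\mathbb{R}$, $f\equiv g$ means $f-g=\sum_{x\in P}c_xT_x$ for some real constants $c_x$; a real number denotes the corresponding constant function. *)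

theory Defs
  imports Complex_Main
begin

definition posA :: "nat \<Rightarrow> (nat \<times> nat) set" where
  "posA n = {(i,j). 1 \<le> i \<and> i \<le> n \<and> 1 \<le> j \<and> j \<le> n \<and> i + j \<ge> n + 1}"

definition leqP :: "nat \<times> nat \<Rightarrow> nat \<times> nat \<Rightarrow> bool" where
  "leqP x y \<longleftrightarrow> fst x \<le> fst y \<and> snd x \<le> snd y"

definition order_ideals :: "(nat \<times> nat) set \<Rightarrow> (nat \<times> nat) set set" where
  "order_ideals P = {I. I \<subseteq> P \<and> (\<forall>x\<in>I. \<forall>y\<in>P. leqP y x \<longrightarrow> y \<in> I)}"

definition indic :: "nat \<times> nat \<Rightarrow> (nat \<times> nat) set \<Rightarrow> real" where
  "indic x I = (if x \<in> I then 1 else 0)"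

definition Tplus :: "(nat \<times> nat) set \<Rightarrow> nat \<times> nat \<Rightarrow> (nat \<times> nat) set \<Rightarrow> real" where
  "Tplus P x I = (if x \<in> P - I \<and> (\<forall>y\<in>P - I. leqP y x \<longrightarrow> y = x) then 1 else 0)"

definition Tminus :: "(nat \<times> nat) set \<Rightarrow> nat \<times> nat \<Rightarrow> (nat \<times> nat) set \<Rightarrow> real" where
  "Tminus P x I = (if x \<in> I \<and> (\<forall>y\<in>I. leqP x y \<longrightarrow> y = x) then 1 else 0)"

definition toggle :: "(nat \<times> nat) set \<Rightarrow> nat \<times> nat \<Rightarrow> (nat \<times> nat) set \<Rightarrow> real" where
  "toggle P x I = Tplus P x I - Tminus P x I"

definition toggle_equiv :: "(nat \<times> nat) set \<Rightarrow> ((nat \<times> nat) set \<Rightarrow> real) \<Rightarrow> ((nat \<times> nat) set \<Rightarrow> real) \<Rightarrow> bool" where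
  "toggle_equiv P f g \<longleftrightarrow>
     (\<exists>c :: nat \<times> nat \<Rightarrow> real. \<forall>I\<in>order_ideals P. f I - g I = (\<Sum>x\<in>P. c x * toggle P x I))"

end

theory Submission
  imports Defs
begin

text \<open>
  The minimal element of the diagonal j - i = k of P is (p, q) with p + q = n + 1.  Put
  x_t = (p + t, q + t) and let u_t = (p + t, q + t + 1), v_t = (p + t + 1, q + t) be its upper
  covers.  By inclusion-exclusion T^-(x_t) = 1(x_t) - 1(u_t) - 1(v_t) + 1(u_t) 1(v_t), and as
  u_t, v_t are also the lower covers of x_(t+1), T^+(x_(t+1)) = 1(u_t) 1(v_t) - 1(x_(t+1)),
  while T^+(x_0) = 1 - 1(x_0).  Summing T(x_t) along the diagonal the products telescope,
  leaving 1 - 2 \<Sum> 1(x_t) + \<Sum> 1(u_t) + \<Sum> 1(v_t), and the u_t and v_t run through the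
  diagonals k + 1 and k - 1.  So the coefficients -1 on the diagonal k and 0 elsewhere witness
  the equivalence.
\<close>

text \<open>In a grid-convex P the covers of a point are among its two grid neighbours in each
  direction.\<close>
definition grid_convex :: "(nat \<times> nat) set \<Rightarrow> bool" where
  "grid_convex P \<longleftrightarrow> (\<forall>x\<in>P. \<forall>z\<in>P. \<forall>y. leqP x y \<and> leqP y z \<longrightarrow> y \<in> P)"

lemma grid_convexD:
  assumes "grid_convex P" "(a, b) \<in> P" "(c, d) \<in> P" "a \<le> x" "x \<le> c" "b \<le> y" "y \<le> d"
  shows "(x, y) \<in> P"
  using assms unfolding grid_convex_def leqP_def by fastforce

lemma order_idealsD:
  assumes "I \<in> order_ideals P"
  shows "I \<subseteq> P" "x \<in> I \<Longrightarrow> y \<in> P \<Longrightarrow> leqP y x \<Longrightarrow> y \<in> I"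
  using assms unfolding order_ideals_def by auto

lemma toggle_outside:
  assumes "I \<in> order_ideals P" "x \<notin> P"
  shows "toggle P x I = 0"
  using assms order_idealsD(1)[OF assms(1)]
  unfolding toggle_def Tplus_def Tminus_def by auto

lemma maximal_in_ideal_iff:
  assumes P: "grid_convex P" and I: "I \<in> order_ideals P" and x: "(a, b) \<in> I"
  shows "(\<forall>y\<in>I. leqP (a, b) y \<longrightarrow> y = (a, b)) \<longleftrightarrow> (a, Suc b) \<notin> I \<and> (Suc a, b) \<notin> I"
proof
  assume "\<forall>y\<in>I. leqP (a, b) y \<longrightarrow> y = (a, b)"
  then show "(a, Suc b) \<notin> I \<and> (Suc a, b) \<notin> I" unfolding leqP_def by auto
next
  assume covers: "(a, Suc b) \<notin> I \<and> (Suc a, b) \<notin> I"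
  show "\<forall>y\<in>I. leqP (a, b) y \<longrightarrow> y = (a, b)"
  proof (intro ballI impI)
    fix y assume y: "y \<in> I" "leqP (a, b) y"
    obtain c d where y_eq: "y = (c, d)" by fastforce
    have xP: "(a, b) \<in> P" and yP: "(c, d) \<in> P"
      using x y y_eq order_idealsD(1)[OF I] by auto
    have le: "a \<le> c" "b \<le> d" using y(2) y_eq by (auto simp: leqP_def)
    have "\<not> Suc a \<le> c"
    proof
      assume "Suc a \<le> c"
      then have "(Suc a, b) \<in> P" using grid_convexD[OF P xP yP] le by simp
      then have "(Suc a, b) \<in> I"
        using order_idealsD(2)[OF I y(1)] \<open>Suc a \<le> c\<close> le y_eq by (simp add: leqP_def)
      with covers show False by blast
    qed
    moreover have "\<not> Suc b \<le> d"
    proof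
      assume "Suc b \<le> d"
      then have "(a, Suc b) \<in> P" using grid_convexD[OF P xP yP] le by simp
      then have "(a, Suc b) \<in> I"
        using order_idealsD(2)[OF I y(1)] \<open>Suc b \<le> d\<close> le y_eq by (simp add: leqP_def)
      with covers show False by blast
    qed
    ultimately show "y = (a, b)" using le y_eq by simp
  qed
qed

lemma minimal_outside_ideal_iff:
  assumes I: "I \<in> order_ideals P" and lower: "(a, Suc b) \<in> P" "(Suc a, b) \<in> P"
  shows "(\<forall>y\<in>P - I. leqP y (Suc a, Suc b) \<longrightarrow> y = (Suc a, Suc b)) \<longleftrightarrow>
         (a, Suc b) \<in> I \<and> (Suc a, b) \<in> I"
proof
  assume min: "\<forall>y\<in>P - I. leqP y (Suc a, Suc b) \<longrightarrow> y = (Suc a, Suc b)"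
  have "(a, Suc b) \<notin> P - I" "(Suc a, b) \<notin> P - I"
    using min[rule_format, of "(a, Suc b)"] min[rule_format, of "(Suc a, b)"]
    by (auto simp: leqP_def)
  then show "(a, Suc b) \<in> I \<and> (Suc a, b) \<in> I" using lower by blast
next
  assume covers: "(a, Suc b) \<in> I \<and> (Suc a, b) \<in> I"
  show "\<forall>y\<in>P - I. leqP y (Suc a, Suc b) \<longrightarrow> y = (Suc a, Suc b)"
  proof (intro ballI impI)
    fix y assume y: "y \<in> P - I" "leqP y (Suc a, Suc b)"
    have "\<not> leqP y (a, Suc b)" "\<not> leqP y (Suc a, b)"
      using y(1) covers order_idealsD(2)[OF I] by blast+
    then show "y = (Suc a, Suc b)" using y(2) unfolding leqP_def by (cases y) auto
  qed
qed

lemma Tminus_eq_indic: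
  assumes P: "grid_convex P" and I: "I \<in> order_ideals P" and x: "(a, b) \<in> P"
  shows "Tminus P (a, b) I =
    indic (a, b) I - indic (a, Suc b) I - indic (Suc a, b) I + indic (a, Suc b) I * indic (Suc a, b) I"
proof -
  have "(a, b) \<in> I" if "(a, Suc b) \<in> I \<or> (Suc a, b) \<in> I"
    using that order_idealsD(2)[OF I _ x] by (auto simp: leqP_def)
  then show ?thesis
    using maximal_in_ideal_iff[OF P I] unfolding Tminus_def indic_def by auto
qed

lemma Tplus_eq_indic:
  assumes I: "I \<in> order_ideals P"
    and lower: "(a, Suc b) \<in> P" "(Suc a, b) \<in> P" and x: "(Suc a, Suc b) \<in> P"
  shows "Tplus P (Suc a, Suc b) I = indic (a, Suc b) I * indic (Suc a, b) I - indic (Suc a, Suc b) I"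
proof -
  have "(a, Suc b) \<in> I \<and> (Suc a, b) \<in> I" if "(Suc a, Suc b) \<in> I"
    using that lower order_idealsD(2)[OF I] by (auto simp: leqP_def)
  then show ?thesis
    using minimal_outside_ideal_iff[OF I lower] x unfolding Tplus_def indic_def by auto
qed

lemma Tplus_minimal:
  assumes "x \<in> P" "\<forall>y\<in>P. leqP y x \<longrightarrow> y = x"
  shows "Tplus P x I = 1 - indic x I"
  using assms unfolding Tplus_def indic_def by auto

lemma sum_toggle_diagonal:
  assumes P: "grid_convex P" and I: "I \<in> order_ideals P"
    and start: "(p, q) \<in> P" "\<forall>y\<in>P. leqP y (p, q) \<longrightarrow> y = (p, q)"
    and top: "(p + m, q + m) \<in> P"
    and exit: "(p + m, Suc (q + m)) \<notin> P \<or> (Suc (p + m), q + m) \<notin> P"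
  shows "(\<Sum>t\<le>m. toggle P (p + t, q + t) I) =
    1 - 2 * (\<Sum>t\<le>m. indic (p + t, q + t) I)
      + (\<Sum>t\<le>m. indic (p + t, Suc (q + t)) I) + (\<Sum>t\<le>m. indic (Suc (p + t), q + t) I)"
proof -
  define e where "e t = indic (p + t, q + t) I" for t
  define u where "u t = indic (p + t, Suc (q + t)) I" for t
  define v where "v t = indic (Suc (p + t), q + t) I" for t
  define F where "F t = (case t of 0 \<Rightarrow> 1 | Suc s \<Rightarrow> u s * v s)" for t
  have diag: "(p + t, q + t) \<in> P" if "t \<le> m" for t
    using grid_convexD[OF P start(1) top] that by simp
  have Tplus: "Tplus P (p + t, q + t) I = F t - e t" if "t \<le> m" for t
  proof (cases t)
    case 0
    then show ?thesis using Tplus_minimal[OF start] unfolding F_def e_def by simp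
  next
    case (Suc s)
    have "(p + s, Suc (q + s)) \<in> P" "(Suc (p + s), q + s) \<in> P"
      using grid_convexD[OF P start(1) top] Suc that by auto
    then show ?thesis
      using Tplus_eq_indic[OF I] diag[OF that] Suc unfolding F_def e_def u_def v_def by simp
  qed
  have Tminus: "Tminus P (p + t, q + t) I = e t - u t - v t + F (Suc t)" if "t \<le> m" for t
    using Tminus_eq_indic[OF P I diag[OF that]] unfolding e_def u_def v_def F_def by simp
  have "F (Suc m) = 0"
    using exit order_idealsD(1)[OF I] unfolding F_def u_def v_def indic_def by auto
  then have "(\<Sum>t\<le>m. F t - F (Suc t)) = 1"
    by (simp add: sum_telescope F_def[of 0])
  moreover have "(\<Sum>t\<le>m. toggle P (p + t, q + t) I) =
      (\<Sum>t\<le>m. (F t - F (Suc t)) - 2 * e t + u t + v t)"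
    by (rule sum.cong) (simp_all add: toggle_def Tplus Tminus)
  moreover have "\<dots> = (\<Sum>t\<le>m. F t - F (Suc t)) - 2 * (\<Sum>t\<le>m. e t) + (\<Sum>t\<le>m. u t) + (\<Sum>t\<le>m. v t)"
    by (simp add: sum.distrib sum_subtractf sum_distrib_left)
  ultimately show ?thesis unfolding e_def u_def v_def by simp
qed

lemma sum_diagonal:
  fixes h :: "nat \<times> nat \<Rightarrow> real"
  assumes zero: "\<And>x. x \<notin> P \<Longrightarrow> h x = 0"
    and range: "\<And>i j. (i, j) \<in> P \<Longrightarrow> int j - int i = int b - int a \<Longrightarrow> a \<le> i \<and> i \<le> a + m"
  shows "(\<Sum>x\<in>{x\<in>P. int (snd x) - int (fst x) = int b - int a}. h x) = (\<Sum>t\<le>m. h (a + t, b + t))"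
proof -
  let ?diag = "\<lambda>t. (a + t, b + t)"
  have "(\<Sum>t\<le>m. h (a + t, b + t)) = (\<Sum>x\<in>?diag ` {..m}. h x)"
    by (simp add: sum.reindex inj_on_def)
  also have "\<dots> = (\<Sum>x\<in>{x\<in>P. int (snd x) - int (fst x) = int b - int a}. h x)"
  proof (rule sum.mono_neutral_right)
    show "{x\<in>P. int (snd x) - int (fst x) = int b - int a} \<subseteq> ?diag ` {..m}"
    proof
      fix x assume "x \<in> {x\<in>P. int (snd x) - int (fst x) = int b - int a}"
      moreover obtain i j where x_eq: "x = (i, j)" by fastforce
      ultimately have ij: "(i, j) \<in> P" "int j - int i = int b - int a" by auto
      then have "a \<le> i" "i \<le> a + m" "j = b + (i - a)" using range[OF ij] by auto
      then show "x \<in> ?diag ` {..m}" unfolding x_eq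
        by (auto intro!: image_eqI[where x = "i - a"])
    qed
  qed (use zero in auto)
  finally show ?thesis by simp
qed

lemma finite_posA: "finite (posA n)"
  by (rule finite_subset[of _ "{1..n} \<times> {1..n}"]) (auto simp: posA_def)

lemma grid_convex_posA: "grid_convex (posA n)"
  unfolding grid_convex_def posA_def leqP_def by auto

text \<open>For the shifted diagonals the last of these min p q grid points may lie outside posA n,
  where h vanishes.\<close>
lemma sum_posA_diagonal:
  fixes h :: "nat \<times> nat \<Rightarrow> real"
  assumes "1 \<le> p" "1 \<le> q" "p + q = n + 1" and "(a, b) \<in> {(p, q), (Suc p, q), (p, Suc q)}"
    and "\<And>x. x \<notin> posA n \<Longrightarrow> h x = 0"
  shows "(\<Sum>x\<in>{x\<in>posA n. int (snd x) - int (fst x) = int b - int a}. h x) =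
    (\<Sum>t\<le>min p q - 1. h (a + t, b + t))"
proof (rule sum_diagonal)
  fix i j assume "(i, j) \<in> posA n" "int j - int i = int b - int a"
  with assms(1-4) show "a \<le> i \<and> i \<le> a + (min p q - 1)" unfolding posA_def by auto
qed (use assms(5) in simp)

lemma sum_toggle_posA_diagonal:
  assumes I: "I \<in> order_ideals (posA n)" and pq: "1 \<le> p" "1 \<le> q" "p + q = n + 1"
  shows "(\<Sum>x\<in>{x\<in>posA n. int (snd x) - int (fst x) = int q - int p}. toggle (posA n) x I) =
    1 - 2 * (\<Sum>x\<in>{x\<in>posA n. int (snd x) - int (fst x) = int q - int p}. indic x I)
      + (\<Sum>x\<in>{x\<in>posA n. int (snd x) - int (fst x) = int q - int p + 1}. indic x I)
      + (\<Sum>x\<in>{x\<in>posA n. int (snd x) - int (fst x) = int q - int p - 1}. indic x I)"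
proof -
  define m where "m = min p q - 1"
  have start: "(p, q) \<in> posA n" "\<forall>y\<in>posA n. leqP y (p, q) \<longrightarrow> y = (p, q)"
    and top: "(p + m, q + m) \<in> posA n"
    and exit: "(p + m, Suc (q + m)) \<notin> posA n \<or> (Suc (p + m), q + m) \<notin> posA n"
    using pq unfolding posA_def leqP_def m_def by auto
  have indic_outside: "indic x I = 0" if "x \<notin> posA n" for x
    using that order_idealsD(1)[OF I] unfolding indic_def by auto
  have toggle_sum: "(\<Sum>x\<in>{x\<in>posA n. int (snd x) - int (fst x) = int q - int p}. toggle (posA n) x I) =
      (\<Sum>t\<le>m. toggle (posA n) (p + t, q + t) I)"
    unfolding m_def by (rule sum_posA_diagonal[OF pq]) (simp_all add: toggle_outside[OF I])
  have indic_sum: "(\<Sum>x\<in>{x\<in>posA n. int (snd x) - int (fst x) = int b - int a}. indic x I) =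
      (\<Sum>t\<le>m. indic (a + t, b + t) I)" if "(a, b) \<in> {(p, q), (Suc p, q), (p, Suc q)}" for a b
    unfolding m_def by (rule sum_posA_diagonal[OF pq that]) (rule indic_outside)
  have "(\<Sum>x\<in>{x\<in>posA n. int (snd x) - int (fst x) = int q - int p + 1}. indic x I) =
      (\<Sum>t\<le>m. indic (p + t, Suc (q + t)) I)"
    using indic_sum[of p "Suc q"] by (simp add: algebra_simps)
  moreover have "(\<Sum>x\<in>{x\<in>posA n. int (snd x) - int (fst x) = int q - int p - 1}. indic x I) =
      (\<Sum>t\<le>m. indic (Suc (p + t), q + t) I)"
    using indic_sum[of "Suc p" q] by (simp add: algebra_simps)
  ultimately show ?thesis
    unfolding toggle_sum indic_sum[of p q, simplified]
    using sum_toggle_diagonal[OF grid_convex_posA I start top exit] by simp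
qed

theorem theorem3p28:
  fixes n :: nat and k :: int
  assumes "n \<ge> 1"
    and "\<bar>k\<bar> \<le> int n - 1"
    and "even (int n - 1 - k)"
  shows "toggle_equiv (posA n)
           (\<lambda>I. 2 * (\<Sum>x\<in>{x\<in>posA n. int (snd x) - int (fst x) = k}. indic x I)
                - (\<Sum>x\<in>{x\<in>posA n. int (snd x) - int (fst x) = k - 1}. indic x I)
                - (\<Sum>x\<in>{x\<in>posA n. int (snd x) - int (fst x) = k + 1}. indic x I))
           (\<lambda>I. 1)"
proof -
  obtain r where r: "int n - 1 - k = 2 * r" using assms(3) by (metis evenE)
  obtain p q where pq: "1 \<le> p" "1 \<le> q" "p + q = n + 1" and k: "k = int q - int p"
    using assms(1,2) r by (intro that[of "nat (r + 1)" "n - nat r"]) auto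
  let ?c = "\<lambda>x. if int (snd x) - int (fst x) = k then -1 else 0 :: real"
  show ?thesis unfolding toggle_equiv_def
  proof (intro exI[of _ ?c] ballI)
    fix I assume I: "I \<in> order_ideals (posA n)"
    have "(\<Sum>x\<in>posA n. ?c x * toggle (posA n) x I) =
        - (\<Sum>x\<in>{x\<in>posA n. int (snd x) - int (fst x) = k}. toggle (posA n) x I)"
      unfolding sum.inter_filter[OF finite_posA] sum_negf[symmetric] by (rule sum.cong) auto
    then show "2 * (\<Sum>x\<in>{x\<in>posA n. int (snd x) - int (fst x) = k}. indic x I)
        - (\<Sum>x\<in>{x\<in>posA n. int (snd x) - int (fst x) = k - 1}. indic x I)
        - (\<Sum>x\<in>{x\<in>posA n. int (snd x) - int (fst x) = k + 1}. indic x I) - 1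
        = (\<Sum>x\<in>posA n. ?c x * toggle (posA n) x I)"
      unfolding k sum_toggle_posA_diagonal[OF I pq] by simp
  qed
qed

end
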